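(* Let $r\ge 2$, $n\ge1$ and $\underline m=(m_0,m_1,m_2,m_3)\in\mathbb N^4$ with $\gcd(m_3,r)=n$ and $\gcd(m_i,r)=1$ for $i\ne3$. Then the adjacency matrix of $L_7^{r;\underline m}$ (vertices ordered $v_0^0,v_1^0,v_2^0,v_3^0,\dots,v_3^{n-1}$) is $$\begin{pmatrix}1&r&\frac{r(r+1)}2&x_0&\cdots&x_{n-1}\\0&1&r&y_0&\cdots&y_{n-1}\\0&0&1&\frac rn&\cdots&\frac rn\\0&0&0&&&\\ \vdots&\vdots&\vdots&&I_n&\\0&0&0&&&\end{pmatrix}$$ where $y_0=\frac{r(r+n)}{2n}$; for $1\le t\le n-1$, $y_t\equiv\frac{r(r-n)}{2n}+a_2t\frac rn\pmod r$; and for $0\le t\le n-1$, $x_t-X_t-\frac rn\big(a_1t+a_2t-1\big)\in r\mathbb Z$, where $$X_t=-m_2^{-1}m_1\frac{r(r-2)(r-1)}{3n}+\sum_{l=1}^{r-2}l\,\frac{r(1-k_l)}{n}+\sum_{h=0}^{n-1}\sum_{l\in\Lambda_h}\frac{lh}{n}-\sum_{h=s_t+1}^{n-1}\sum_{l\in\Lambda_h}l .$$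
   Context: Let $r\ge 2$ and $N\ge 0$ be integers and $\underline m=(m_0,\dots,m_N)\in\mathbb N^{N+1}$. The skew product graph $L_{2N+1}\times_{\underline m}\mathbb Z_r$ is the directed graph with vertices $(v_i,k)$, $0\le i\le N$, $k\in\mathbb Z_r=\{0,1,\dots,r-1\}$, and edges $(e_{ij},k)$ for $0\le i\le j\le N$, $k\in\mathbb Z_r$, the edge $(e_{ij},k)$ having source $(v_i,k-m_i \bmod r)$ and range $(v_j,k)$. The vertices $(v_i,k)$, $k\in\mathbb Z_r$, form level $i$. A vertex $(v_l,k)$ is called distinguished if $0\le k<\gcd(m_l,r)$. For distinguished vertices $(v_i,s),(v_j,t)$, an admissible path from $(v_i,s)$ to $(v_j,t)$ is a finite path of positive length in the skew product graph with source $(v_i,s)$ and range $(v_j,t)$ none of whose vertices other than its source and range is distinguished. The graph $L^{r;\underline m}_{2N+1}$ has vertices $v_i^b$ ($0\le i\le N$, $0\le b<\gcd(m_i,r)$) and, for all $i,j,s,t$, exactly as many edges from $v_i^s$ to $v_j^t$ as there are admissible paths from $(v_i,s)$ to $(v_j,t)$. Its adjacency matrix has $(v,w)$ entry equal to the number of edges from $v$ to $w$. Here $N=3$. Notation: $m_2^{-1}\in\{0,\dots,r-1\}$ is the inverse of $m_2$ modulo $r$; $a_1,a_2\in\{0,\dots,n-1\}$ are the inverses of $m_1,m_2$ modulo $n$; for $0\le t\le n-1$, $s_t\in\{0,\dots,n-1\}$ satisfies $s_t\equiv a_2t-1\pmod n$; for $1\le l\le r-2$, $k_l\in\mathbb Z$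 is the integer with $0<m_2^{-1}m_1(l+1)+rk_l<r$; for $0\le h\le n-1$, $\Lambda_h=\{l\in\{1,\dots,r-2\}: l\equiv m_2a_1h-1\pmod n\}$. *)

theory Defs
  imports Complex_Main "HOL-Number_Theory.Cong"
begin

(* Skew product graph L_{2N+1} \<times>_m Z_r.
   Vertex (v_i,k) is the pair (i,k); edge (e_ij,k) is the triple (i,j,k). *)

definition sp_edges :: "nat \<Rightarrow> nat \<Rightarrow> (nat \<times> nat \<times> nat) set" where
  "sp_edges N r = {(i,j,k). i \<le> j \<and> j \<le> N \<and> k < r}"

definition sp_src :: "nat \<Rightarrow> (nat \<Rightarrow> nat) \<Rightarrow> nat \<times> nat \<times> nat \<Rightarrow> nat \<times> nat" where
  "sp_src r m e = (case e of (i,j,k) \<Rightarrow> (i, nat ((int k - int (m i)) mod int r)))"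

definition sp_rng :: "nat \<times> nat \<times> nat \<Rightarrow> nat \<times> nat" where
  "sp_rng e = (case e of (i,j,k) \<Rightarrow> (j,k))"

definition distinguished :: "nat \<Rightarrow> (nat \<Rightarrow> nat) \<Rightarrow> nat \<times> nat \<Rightarrow> bool" where
  "distinguished r m v = (case v of (l,k) \<Rightarrow> k < gcd (m l) r)"

definition admissible_paths ::
  "nat \<Rightarrow> nat \<Rightarrow> (nat \<Rightarrow> nat) \<Rightarrow> nat \<times> nat \<Rightarrow> nat \<times> nat \<Rightarrow> (nat \<times> nat \<times> nat) list set" where
  "admissible_paths N r m v w =
     {p. p \<noteq> [] \<and> set p \<subseteq> sp_edges N r
        \<and> (\<forall>q. Suc q < length p \<longrightarrow> sp_rng (p ! q) = sp_src r m (p ! Suc q))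
        \<and> sp_src r m (hd p) = v \<and> sp_rng (last p) = w
        \<and> (\<forall>q. Suc q < length p \<longrightarrow> \<not> distinguished r m (sp_rng (p ! q)))}"

definition L_adj :: "nat \<Rightarrow> nat \<Rightarrow> (nat \<Rightarrow> nat) \<Rightarrow> nat \<times> nat \<Rightarrow> nat \<times> nat \<Rightarrow> nat" where
  "L_adj N r m v w = card (admissible_paths N r m v w)"

definition k_idx :: "nat \<Rightarrow> nat \<Rightarrow> nat \<Rightarrow> nat \<Rightarrow> int" where
  "k_idx r m1 m2inv l =
     (THE k::int. 0 < int m2inv * int m1 * (int l + 1) + int r * k
                \<and> int m2inv * int m1 * (int l + 1) + int r * k < int r)"

definition Lambda :: "nat \<Rightarrow> nat \<Rightarrow> nat \<Rightarrow> nat \<Rightarrow> nat \<Rightarrow> nat set" where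
  "Lambda r n m2 a1 h = {l \<in> {1..r-2}. [int l = int m2 * int a1 * int h - 1] (mod int n)}"

definition s_idx :: "nat \<Rightarrow> nat \<Rightarrow> nat \<Rightarrow> nat" where
  "s_idx n a2 t = nat ((int a2 * int t - 1) mod int n)"

definition X_val :: "nat \<Rightarrow> nat \<Rightarrow> (nat \<Rightarrow> nat) \<Rightarrow> nat \<Rightarrow> nat \<Rightarrow> nat \<Rightarrow> nat \<Rightarrow> rat" where
  "X_val r n m m2inv a1 a2 t =
     - of_nat m2inv * of_nat (m 1) * of_nat r * (of_nat r - 2) * (of_nat r - 1) / (3 * of_nat n)
     + (\<Sum>l\<in>{1..r-2}. of_nat l * (of_nat r * (1 - of_int (k_idx r (m 1) m2inv l)) / of_nat n))
     + (\<Sum>h\<in>{0..n-1}. \<Sum>l\<in>Lambda r n (m 2) a1 h. of_nat l * of_nat h / of_nat n)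
     - (\<Sum>h\<in>{s_idx n a2 t + 1..n-1}. \<Sum>l\<in>Lambda r n (m 2) a1 h. of_nat l)"

end

theory Submission
  imports Defs
begin

text \<open>
  An admissible path is determined by its first edge, so the number of admissible paths out of a
  vertex satisfies a recursion over the level of the range of that edge. On the levels \<open>0, 1, 2\<close>
  the multiplier is a unit modulo \<open>r\<close>, so \<open>0\<close> is the only distinguished vertex of the level and
  a path moves along the orbit \<open>\<dots>, -2 m\<^sub>i, -m\<^sub>i, 0\<close>; summing the recursion along this orbit
  expresses the counts out of level \<open>i\<close> through counts out of the higher levels. On level \<open>3\<close>
  the distinguished vertices are \<open>0, \<dots>, n - 1\<close> and every step preserves the residue modulo
  \<open>n\<close>, so a path entering level \<open>3\<close> at \<open>k\<close> ends at \<open>k mod n\<close>. All entries thus become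
  weighted counts of residues modulo \<open>n\<close>. For \<open>x\<^sub>t\<close> one of these counts runs over the
  positions \<open>q m\<^sub>2\<^sup>-\<^sup>1 m\<^sub>1 mod r\<close>, and the reflection \<open>q \<mapsto> r - q\<close> matches it with
  \<open>X\<^sub>t\<close>.
\<close>

section \<open>Counting residues\<close>

lemma nat_mod_diff_eq_iff:
  fixes k s a r :: nat
  assumes "k < r" "s < r"
  shows "nat ((int k - int a) mod int r) = s \<longleftrightarrow> k = (s + a) mod r"
proof -
  have "nat ((int k - int a) mod int r) = s \<longleftrightarrow> (int k - int a) mod int r = int s mod int r"
    using assms by auto
  also have "\<dots> \<longleftrightarrow> int k mod int r = (int s + int a) mod int r"
    by (simp add: mod_eq_dvd_iff algebra_simps)
  also have "\<dots> \<longleftrightarrow> k = (s + a) mod r"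
    using assms by (metis mod_less of_nat_add of_nat_eq_iff zmod_int)
  finally show ?thesis .
qed

lemma exists_mod_less_gcd:
  fixes a k r :: nat
  assumes "0 < r"
  shows "\<exists>q>0. (k + q * a) mod r < gcd a r"
proof (cases "a = 0")
  case True
  then show ?thesis using assms by (intro exI[of _ 1]) auto
next
  case False
  define g where "g = gcd a r"
  obtain x y where xy: "a * x = r * y + g" using bezout_nat[OF False, of r] unfolding g_def by blast
  define c where "c = k div g"
  have "0 < g" "g \<le> r" unfolding g_def using assms by (simp_all add: gcd_le2_nat)
  obtain r' where r': "r = Suc r'" using assms by (cases r) auto
  define q where "q = x * c * r' + r"
  have k: "k = k mod g + g * c" unfolding c_def by simp
  have "k + q * a = k mod g + g * c + c * r' * (a * x) + r * a"
    unfolding q_def using k by (simp add: algebra_simps)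
  also have "\<dots> = k mod g + r * (c * r' * y + c * g + a)"
    unfolding xy r' by (simp add: algebra_simps)
  finally have "(k + q * a) mod r = k mod g"
    using \<open>0 < g\<close> \<open>g \<le> r\<close> by (simp add: mod_less[OF order_less_le_trans[OF mod_less_divisor]])
  moreover have "0 < q" unfolding q_def using assms by simp
  ultimately show ?thesis using \<open>0 < g\<close> unfolding g_def by auto
qed

lemma sum_triangle_lessThan:
  "(\<Sum>d<K. \<Sum>p<d. h p) = (\<Sum>p<K. (K - 1 - p) * (h p :: nat))"
proof (induction K)
  case (Suc K)
  have "(\<Sum>p<K. (K - 1 - p) * h p + h p) = (\<Sum>p<K. (Suc K - 1 - p) * h p)"
  proof (intro sum.cong refl)
    fix p assume "p \<in> {..<K}"
    then have "Suc K - 1 - p = Suc (K - 1 - p)" by auto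
    then show "(K - 1 - p) * h p + h p = (Suc K - 1 - p) * h p" by simp
  qed
  then show ?case using Suc by (simp add: sum.distrib)
qed simp

lemma sum_residue_class:
  fixes c n R :: nat
  assumes "c < n"
  shows "(\<Sum>x<n * R. if x mod n = c then h x else 0) = (\<Sum>j<R. h (c + n * j))"
proof -
  have "{x. x < n * R \<and> x mod n = c} = (\<lambda>j. c + n * j) ` {..<R}"
  proof (intro set_eqI iffI)
    fix x assume x: "x \<in> {x. x < n * R \<and> x mod n = c}"
    then have "x = c + n * (x div n)" "x div n < R"
      by (auto simp: less_mult_imp_div_less mult.commute)
    then show "x \<in> (\<lambda>j. c + n * j) ` {..<R}" by blast
  next
    fix x assume "x \<in> (\<lambda>j. c + n * j) ` {..<R}"
    then obtain j where "j < R" "x = c + n * j" by auto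
    moreover have "c + n * j < n * Suc j" using assms by simp
    moreover have "n * Suc j \<le> n * R" using \<open>j < R\<close> by (intro mult_le_mono2) simp
    ultimately show "x \<in> {x. x < n * R \<and> x mod n = c}" using assms by simp
  qed
  moreover have "(\<Sum>x<n * R. if x mod n = c then h x else 0) = (\<Sum>x\<in>{x\<in>{..<n * R}. x mod n = c}. h x)"
    by (rule sum.inter_filter[symmetric]) simp
  ultimately have "(\<Sum>x<n * R. if x mod n = c then h x else 0) = (\<Sum>x\<in>(\<lambda>j. c + n * j) ` {..<R}. h x)"
    by simp
  also have "\<dots> = (\<Sum>j<R. h (c + n * j))"
    using assms by (intro sum.reindex_cong[of "\<lambda>j. c + n * j"]) (auto simp: inj_on_def)
  finally show ?thesis .
qed

lemma count_residue_lessThan: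
  fixes c n d :: nat
  assumes "c < n"
  shows "(\<Sum>p<d. if p mod n = c then 1 else 0) = d div n + (if c < d mod n then 1 else (0::nat))"
proof (induction d)
  case (Suc d)
  show ?case
  proof (cases "Suc (d mod n) = n")
    case True
    then have "Suc d mod n = 0" "Suc d div n = Suc (d div n)"
      by (simp_all add: mod_Suc div_Suc)
    then show ?thesis using Suc True assms by auto
  next
    case False
    then have "Suc d mod n = Suc (d mod n)" "Suc d div n = d div n"
      by (simp_all add: mod_Suc div_Suc)
    then show ?thesis using Suc assms by auto
  qed
qed simp

lemma sum_div_lessThan:
  fixes n R :: nat
  shows "(\<Sum>d<R * n. d div n) = n * (\<Sum>j<R. j)"
proof -
  have "(\<Sum>d\<in>{j * n..<j * n + n}. d div n) = (\<Sum>d\<in>{j * n..<j * n + n}. j)" for j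
    by (intro sum.cong refl div_nat_eqI) (auto simp: algebra_simps)
  then have "(\<Sum>d<R * n. d div n) = (\<Sum>j<R. n * j)"
    unfolding sum.nat_group[symmetric] by simp
  then show ?thesis by (simp add: sum_distrib_left)
qed

lemma sum_of_nat_lessThan:
  "(\<Sum>j<R. of_nat j :: 'a::field_char_0) = of_nat R * (of_nat R - 1) / 2"
  by (induction R) (auto simp: field_simps)

lemma sum_of_nat_mult_Suc:
  "(\<Sum>l\<in>{1..K}. of_nat l * (of_nat l + 1) :: 'a::field_char_0) = of_nat K * (of_nat K + 1) * (of_nat K + 2) / 3"
  by (induction K) (auto simp: field_simps)

lemma the_shift_into_range:
  fixes v r :: int
  assumes "0 < r" "\<not> r dvd v"
  shows "(THE k. 0 < v + r * k \<and> v + r * k < r) = - (v div r)"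
proof (rule the_equality)
  have "v + r * - (v div r) = v mod r"
    by (simp add: minus_div_mult_eq_mod[symmetric] algebra_simps)
  moreover have "v mod r \<noteq> 0" using assms(2) by auto
  ultimately show "0 < v + r * - (v div r) \<and> v + r * - (v div r) < r"
    using assms(1) by (simp add: order_le_neq_trans)
next
  fix k assume k: "0 < v + r * k \<and> v + r * k < r"
  then have "(v + r * k) div r = 0" by (simp add: div_pos_pos_trivial)
  then have "v div r + k = 0" using assms(1) by simp
  then show "k = - (v div r)" by simp
qed

lemma sum_atLeastAtMost_shift:
  fixes G :: "nat \<Rightarrow> 'a::comm_monoid_add"
  assumes "2 \<le> r" "G 0 = 0"
  shows "(\<Sum>l\<in>{1..r-2}. G l) = (\<Sum>q\<in>{1..<r}. G (q - 1))"
proof -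
  obtain r' where r': "r = Suc (Suc r')" using assms(1) by (metis add_2_eq_Suc le_Suc_ex)
  have "(\<Sum>q\<in>{Suc 0..<Suc (Suc r')}. G (q - 1)) = (\<Sum>i\<in>{0..<Suc r'}. G i)"
    by (simp only: sum.shift_bounds_Suc_ivl) simp
  also have "\<dots> = G 0 + (\<Sum>l\<in>{Suc 0..r'}. G l)"
    by (simp add: atLeastLessThanSuc_atLeastAtMost sum.atLeast_Suc_atMost)
  finally show ?thesis using r' assms(2) by simp
qed

lemma sum_lessThan_split_0:
  fixes h :: "nat \<Rightarrow> 'a::comm_monoid_add"
  assumes "0 < r"
  shows "(\<Sum>x<r. h x) = h 0 + (\<Sum>x\<in>{1..<r}. h x)"
    and "(\<Sum>x<r. if x = 0 then 0 else h x) = (\<Sum>x\<in>{1..<r}. h x)"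
proof -
  show split: "(\<Sum>x<r. h x) = h 0 + (\<Sum>x\<in>{1..<r}. h x)" for h :: "nat \<Rightarrow> 'a"
    using assms by (simp add: atLeast0LessThan[symmetric] sum.atLeast_Suc_lessThan)
  show "(\<Sum>x<r. if x = 0 then 0 else h x) = (\<Sum>x\<in>{1..<r}. h x)"
    unfolding split by (auto intro: sum.cong)
qed

lemma neg_mod_add_pred_mod:
  fixes A n :: int
  assumes "0 < n"
  shows "(- A) mod n + (A - 1) mod n = n - 1"
proof (cases "A mod n = 0")
  case True
  have "(A - 1) mod n = (A mod n - 1) mod n" by (simp add: mod_diff_left_eq)
  also have "\<dots> = (-1 + n) mod n" using True by (simp only: mod_add_self2) simp
  also have "\<dots> = n - 1" using assms by (subst mod_pos_pos_trivial) auto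
  finally show ?thesis using True by (simp add: zmod_zminus1_eq_if)
next
  case False
  have "0 \<le> A mod n" "A mod n < n" using assms by simp_all
  then have "(A mod n - 1) mod n = A mod n - 1" using False by (intro mod_pos_pos_trivial) linarith+
  then have "(A - 1) mod n = A mod n - 1" by (simp add: mod_diff_left_eq)
  then show ?thesis using False by (simp add: zmod_zminus1_eq_if)
qed

lemma sum_pred_atLeastLessThan:
  assumes "0 < r"
  shows "(\<Sum>q\<in>{1..<r}. of_nat (q - 1) :: 'a::field_char_0) = of_nat r * (of_nat r - 1) / 2 - of_nat r + 1"
proof -
  have "(\<Sum>q\<in>{1..<r}. of_nat (q - 1) :: 'a) = (\<Sum>q\<in>{1..<r}. of_nat q - 1)"
    by (intro sum.cong) (auto simp: of_nat_diff)
  also have "\<dots> = (\<Sum>q<r. of_nat q - 1) + 1"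
    using sum_lessThan_split_0(1)[OF assms, of "\<lambda>q. of_nat q - (1::'a)"] by simp
  finally show ?thesis by (simp add: sum_subtractf sum_of_nat_lessThan)
qed

lemma of_nat_indicator: "(of_nat (if P then 1 else 0) :: 'a::semiring_1) = (if P then 1 else 0)"
  by simp

section \<open>Admissible paths by their first edge\<close>

locale skew_product =
  fixes N r :: nat and m :: "nat \<Rightarrow> nat"
  assumes r_pos: "0 < r"
begin

abbreviation paths :: "nat \<times> nat \<Rightarrow> nat \<times> nat \<Rightarrow> (nat \<times> nat \<times> nat) list set" where
  "paths \<equiv> admissible_paths N r m"

abbreviation npaths :: "nat \<times> nat \<Rightarrow> nat \<times> nat \<Rightarrow> nat" where
  "npaths v w \<equiv> card (paths v w)"

abbreviation disting :: "nat \<times> nat \<Rightarrow> bool" where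
  "disting \<equiv> distinguished r m"

definition step :: "nat \<Rightarrow> nat \<Rightarrow> nat" where
  "step i s = (s + m i) mod r"

lemma step_less: "step i s < r"
  unfolding step_def using r_pos by simp

lemma edge_from_iff:
  assumes "s < r"
  shows "e \<in> sp_edges N r \<and> sp_src r m e = (i, s) \<longleftrightarrow> (\<exists>j. i \<le> j \<and> j \<le> N \<and> e = (i, j, step i s))"
proof (cases e)
  case (fields i' j k)
  have "nat ((int k - int (m i)) mod int r) = s \<longleftrightarrow> k = step i s" if "k < r"
    using nat_mod_diff_eq_iff[OF that assms] unfolding step_def .
  moreover have "nat ((int (step i s) - int (m i)) mod int r) = s"
    using nat_mod_diff_eq_iff[OF step_less assms] unfolding step_def by simp
  ultimately show ?thesis
    using fields step_less by (auto simp: sp_edges_def sp_src_def)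
qed

definition paths_via :: "nat \<Rightarrow> nat \<Rightarrow> nat \<times> nat \<Rightarrow> nat \<Rightarrow> (nat \<times> nat \<times> nat) list set" where
  "paths_via i s w j =
     (if (j, step i s) = w then {[(i, j, step i s)]} else {}) \<union>
     (if disting (j, step i s) then {} else Cons (i, j, step i s) ` paths (j, step i s) w)"

lemma paths_Cons_iff:
  "e # p \<in> paths v w \<longleftrightarrow>
     e \<in> sp_edges N r \<and> sp_src r m e = v \<and>
     (p = [] \<and> sp_rng e = w \<or> p \<in> paths (sp_rng e) w \<and> \<not> disting (sp_rng e))"
proof (cases p)
  case Nil
  then show ?thesis by (auto simp: admissible_paths_def)
next
  case (Cons e' p')
  have "(\<forall>q. Suc q < length (e # p) \<longrightarrow> P ((e # p) ! q) ((e # p) ! Suc q)) \<longleftrightarrow>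
        P e (hd p) \<and> (\<forall>q. Suc q < length p \<longrightarrow> P (p ! q) (p ! Suc q))" for P
    using Cons by (auto simp: nth_Cons split: nat.splits)
  from this[of "\<lambda>x y. sp_rng x = sp_src r m y"] this[of "\<lambda>x y. \<not> disting (sp_rng x)"]
  show ?thesis using Cons by (auto simp: admissible_paths_def)
qed

lemma paths_decomp:
  assumes "s < r"
  shows "paths (i, s) w = (\<Union>j\<in>{i..N}. paths_via i s w j)"
proof (intro set_eqI iffI)
  fix p assume "p \<in> paths (i, s) w"
  then obtain e p' where p: "p = e # p'" "p \<in> paths (i, s) w"
    by (cases p) (auto simp: admissible_paths_def)
  then obtain j where "i \<le> j" "j \<le> N" "e = (i, j, step i s)"
    using edge_from_iff[OF assms] paths_Cons_iff by blast
  then show "p \<in> (\<Union>j\<in>{i..N}. paths_via i s w j)"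
    using p paths_Cons_iff[of e p'] by (auto simp: paths_via_def sp_rng_def)
next
  fix p assume "p \<in> (\<Union>j\<in>{i..N}. paths_via i s w j)"
  then obtain j where j: "i \<le> j" "j \<le> N" and "p \<in> paths_via i s w j" by auto
  moreover have "(i, j, step i s) \<in> sp_edges N r" "sp_src r m (i, j, step i s) = (i, s)"
    using edge_from_iff[OF assms, of "(i, j, step i s)" i] j by auto
  ultimately show "p \<in> paths (i, s) w"
    by (auto simp: paths_via_def paths_Cons_iff sp_rng_def split: if_splits)
qed

lemma paths_out_of_range:
  assumes "\<not> s < r"
  shows "paths (i, s) w = {}"
proof -
  have "snd (sp_src r m e) < r" for e
    using r_pos by (auto simp: sp_src_def nat_less_iff split: prod.splits)
  then have "sp_src r m (hd p) \<noteq> (i, s)" for p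
    using assms by (metis snd_conv)
  then show ?thesis by (auto simp: admissible_paths_def)
qed

definition steps_to_disting :: "nat \<Rightarrow> nat \<Rightarrow> nat" where
  "steps_to_disting l k = (LEAST q. 0 < q \<and> disting (l, (k + q * m l) mod r))"

lemma steps_to_disting_step:
  assumes "\<not> disting (l, step l k)"
  shows "steps_to_disting l (step l k) < steps_to_disting l k"
proof -
  define d where "d = steps_to_disting l k"
  have "\<exists>q. 0 < q \<and> disting (l, (k + q * m l) mod r)"
    using exists_mod_less_gcd[OF r_pos, of k "m l"] by (auto simp: distinguished_def)
  then have d: "0 < d" "disting (l, (k + d * m l) mod r)"
    unfolding d_def steps_to_disting_def by (rule LeastI2_ex, blast)+
  have "d \<noteq> 1" using d assms unfolding step_def by auto
  have "k + m l + (d - 1) * m l = k + d * m l"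
    using d(1) by (cases d) (auto simp: algebra_simps)
  then have "(step l k + (d - 1) * m l) mod r = (k + d * m l) mod r"
    unfolding step_def by (metis mod_add_left_eq)
  then have "steps_to_disting l (step l k) \<le> d - 1"
    unfolding steps_to_disting_def using d \<open>d \<noteq> 1\<close> by (intro Least_le) auto
  then show ?thesis using d \<open>d \<noteq> 1\<close> unfolding d_def by simp
qed

lemma level_orbit_induct:
  assumes "\<And>k. (\<not> disting (l, step l k) \<Longrightarrow> P (step l k)) \<Longrightarrow> P k"
  shows "P k"
proof (induction k rule: measure_induct_rule[of "steps_to_disting l"])
  case (less k)
  show ?case by (rule assms) (use less steps_to_disting_step in blast)
qed

text \<open>Every edge either climbs a level or, staying on a level, approaches the next
  distinguished vertex of that level.\<close>

lemma paths_induct: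
  assumes "\<And>i s. s < r \<Longrightarrow>
      (\<And>j. j \<in> {i..N} \<Longrightarrow> \<not> disting (j, step i s) \<Longrightarrow> P (j, step i s)) \<Longrightarrow> P (i, s)"
    and "\<And>i s. \<not> s < r \<Longrightarrow> P (i, s)"
  shows "P v"
proof (induction v rule: wf_induct[OF wf_measures[of "[\<lambda>(i, s). N - i, \<lambda>(i, s). steps_to_disting i s]"]])
  case (1 v)
  obtain i s where v: "v = (i, s)" by (cases v)
  show ?case
  proof (cases "s < r")
    case True
    show ?thesis unfolding v
    proof (rule assms(1)[OF True])
      fix j assume "j \<in> {i..N}" "\<not> disting (j, step i s)"
      then have "((j, step i s), v) \<in> measures [\<lambda>(i, s). N - i, \<lambda>(i, s). steps_to_disting i s]"
        using steps_to_disting_step[of i s] v by (cases "j = i") (auto simp: in_measures)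
      then show "P (j, step i s)" using 1 by blast
    qed
  qed (use assms(2) v in simp)
qed

lemma finite_paths: "finite (paths v w)"
proof (induction v rule: paths_induct)
  case (1 i s)
  then show ?case unfolding paths_decomp[OF 1(1)] paths_via_def by auto
qed (simp add: paths_out_of_range)

text \<open>The number of admissible paths to \<open>w\<close> that may continue an edge entering \<open>v\<close>.\<close>

definition npaths_after :: "nat \<times> nat \<Rightarrow> nat \<times> nat \<Rightarrow> nat" where
  "npaths_after v w = (if v = w then 1 else 0) + (if disting v then 0 else npaths v w)"

lemma npaths_rec:
  assumes "s < r"
  shows "npaths (i, s) w = (\<Sum>j\<in>{i..N}. npaths_after (j, step i s) w)"
proof -
  have card_via: "card (paths_via i s w j) = npaths_after (j, step i s) w" for j
  proof -
    have "[] \<notin> paths v w" for v by (simp add: admissible_paths_def)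
    moreover have "card (Cons e ` paths v w) = npaths v w" for e v
      by (rule card_image) (simp add: inj_on_def)
    ultimately show ?thesis
      unfolding paths_via_def npaths_after_def
      by (subst card_Un_disjoint) (auto simp: finite_paths)
  qed
  have "\<forall>p\<in>paths_via i s w j. hd p = (i, j, step i s)" for j
    by (auto simp: paths_via_def)
  then have "paths_via i s w j \<inter> paths_via i s w j' = {}" if "j \<noteq> j'" for j j'
    using that by (metis disjoint_iff prod.inject)
  then have "card (\<Union>j\<in>{i..N}. paths_via i s w j) = (\<Sum>j\<in>{i..N}. card (paths_via i s w j))"
    by (intro card_UN_disjoint) (auto simp: paths_via_def finite_paths)
  then show ?thesis unfolding paths_decomp[OF assms] card_via .
qed

lemma npaths_to_lower_level:
  assumes "J < fst v"
  shows "npaths v (J, t) = 0"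
  using assms
proof (induction v rule: paths_induct)
  case (1 i s)
  then show ?case
    unfolding npaths_rec[OF 1(1)] npaths_after_def by (intro sum.neutral) auto
qed (simp add: paths_out_of_range)

lemma npaths_after_to_lower_level: "J < j \<Longrightarrow> npaths_after (j, x) (J, t) = 0"
  by (simp add: npaths_after_def npaths_to_lower_level)

lemma npaths_rec_split:
  assumes "s < r" "i \<le> N"
  shows "npaths (i, s) w = npaths_after (i, step i s) w + (\<Sum>j\<in>{Suc i..N}. npaths_after (j, step i s) w)"
  unfolding npaths_rec[OF assms(1)] using assms(2) by (simp add: sum.atLeast_Suc_atMost)

lemma npaths_within_level:
  assumes "gcd (m J) r = n" "J \<le> N" "t < n" "k < r"
  shows "npaths (J, k) (J, t) = (if k mod n = t then 1 else 0)"
  using assms(4)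
proof (induction k rule: level_orbit_induct[where l = J])
  case (1 k)
  have "step J k mod n = k mod n"
  proof -
    have "n dvd r" "n dvd m J" using assms(1) by auto
    then have "step J k mod n = (k + m J) mod n" unfolding step_def by (simp add: mod_mod_cancel)
    also have "\<dots> = k mod n" using \<open>n dvd m J\<close> by (metis dvd_imp_mod_0 mod_add_right_eq add_0_right)
    finally show ?thesis .
  qed
  moreover have "npaths (J, k) (J, t) = npaths_after (J, step J k) (J, t)"
    using npaths_rec_split[OF 1(2) assms(2)] by (simp add: npaths_after_to_lower_level)
  ultimately show ?case
    using 1 assms(3) step_less by (auto simp: npaths_after_def distinguished_def assms(1))
qed

lemma npaths_after_within_level:
  assumes "gcd (m J) r = n" "J \<le> N" "t < n" "x < r"
  shows "npaths_after (J, x) (J, t) = (if x mod n = t then 1 else 0)"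
  using npaths_within_level[OF assms] assms by (auto simp: npaths_after_def distinguished_def)

section \<open>Levels with a unit multiplier\<close>

lemma npaths_after_unit_level:
  assumes "coprime (m l) r"
  shows "npaths_after (l, x) w = (if (l, x) = w then 1 else 0) + (if x = 0 then 0 else npaths (l, x) w)"
  using assms by (simp add: npaths_after_def distinguished_def)

text \<open>\<open>behind l d\<close> is the vertex of level \<open>l\<close> from which \<open>d\<close> steps lead to \<open>0\<close>.\<close>

definition behind :: "nat \<Rightarrow> nat \<Rightarrow> nat" where
  "behind l d = nat ((- (int d * int (m l))) mod int r)"

lemma int_behind: "int (behind l d) = (- (int d * int (m l))) mod int r"
  unfolding behind_def using r_pos by simp

lemma behind_less: "behind l d < r"
  using int_behind[of l d] r_pos by (metis of_nat_less_iff pos_mod_bound of_nat_0_less_iff)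

lemma behind_0 [simp]: "behind l 0 = 0"
  unfolding behind_def by simp

lemma behind_r [simp]: "behind l r = 0"
  unfolding behind_def by simp

lemma step_behind_Suc: "step l (behind l (Suc d)) = behind l d"
proof -
  have "int (step l (behind l (Suc d))) = (int (behind l (Suc d)) + int (m l)) mod int r"
    unfolding step_def by (simp add: zmod_int)
  also have "\<dots> = ((- (int (Suc d) * int (m l))) + int (m l)) mod int r"
    unfolding int_behind by (simp add: mod_add_left_eq)
  also have "\<dots> = int (behind l d)"
    unfolding int_behind by (simp add: algebra_simps)
  finally show ?thesis by simp
qed

lemma behind_eq_iff:
  assumes "coprime (m l) r"
  shows "behind l p = behind l q \<longleftrightarrow> [p = q] (mod r)"
proof -
  have "behind l p = behind l q \<longleftrightarrow> int (behind l p) = int (behind l q)"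
    by simp
  also have "\<dots> \<longleftrightarrow> [- (int p * int (m l)) = - (int q * int (m l))] (mod int r)"
    unfolding int_behind cong_def ..
  also have "\<dots> \<longleftrightarrow> [int p * int (m l) = int q * int (m l)] (mod int r)"
    by (simp add: cong_def mod_eq_dvd_iff dvd_diff_commute)
  also have "\<dots> \<longleftrightarrow> [int p = int q] (mod int r)"
    using assms by (simp add: cong_mult_rcancel coprime_commute)
  finally show ?thesis by (simp add: cong_int_iff)
qed

lemma behind_eq_0_iff:
  assumes "coprime (m l) r"
  shows "behind l p = 0 \<longleftrightarrow> r dvd p"
  using behind_eq_iff[OF assms, of p 0] by (simp add: cong_0_iff)

lemma behind_nonzero:
  assumes "coprime (m l) r" "0 < p" "p < r"
  shows "behind l p \<noteq> 0"
  using assms behind_eq_0_iff by (auto dest: nat_dvd_not_less)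

lemma bij_betw_behind:
  assumes "coprime (m l) r"
  shows "bij_betw (behind l) {..<r} {..<r}" "bij_betw (behind l) {1..<r} {1..<r}"
proof -
  have inj: "inj_on (behind l) {..<r}"
    by (auto simp: inj_on_def behind_eq_iff[OF assms] cong_def)
  then show "bij_betw (behind l) {..<r} {..<r}"
    by (simp add: bij_betw_def endo_inj_surj behind_less image_subset_iff)
  have "behind l ` {1..<r} \<subseteq> {1..<r}"
    using behind_nonzero[OF assms] behind_less by (auto simp: Suc_le_eq)
  moreover have "inj_on (behind l) {1..<r}" using inj by (rule inj_on_subset) auto
  ultimately show "bij_betw (behind l) {1..<r} {1..<r}"
    by (simp add: bij_betw_def endo_inj_surj)
qed

lemma sum_behind:
  assumes "coprime (m l) r"
  shows "(\<Sum>p<r. h (behind l p)) = (\<Sum>x<r. h x)"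
    and "(\<Sum>p\<in>{1..<r}. h (behind l p)) = (\<Sum>x\<in>{1..<r}. h x)"
  using sum.reindex_bij_betw[OF bij_betw_behind(1)[OF assms]]
    sum.reindex_bij_betw[OF bij_betw_behind(2)[OF assms]] by blast+

lemma behind_surj:
  assumes "coprime (m l) r" "k < r"
  obtains d where "1 \<le> d" "d \<le> r" "k = behind l d"
proof -
  obtain p where "p < r" "k = behind l p"
    using bij_betw_behind(1)[OF assms(1)] assms(2) by (metis bij_betw_iff_bijections lessThan_iff)
  then show ?thesis
    using that[of p] that[of r] by (cases "p = 0") auto
qed

lemma sum_along_unit_orbit:
  assumes "coprime (m l) r"
    and rec: "\<And>k. k < r \<Longrightarrow> f k = g (step l k) + (if step l k = 0 then 0 else f (step l k))"
    and "1 \<le> d" "d \<le> r"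
  shows "f (behind l d) = (\<Sum>p<d. g (behind l p))"
  using assms(3,4)
proof (induction d)
  case (Suc d)
  have "f (behind l (Suc d)) = g (behind l d) + (if behind l d = 0 then 0 else f (behind l d))"
    using rec[OF behind_less] step_behind_Suc by simp
  moreover have "behind l d \<noteq> 0" if "d \<noteq> 0"
    using behind_nonzero[OF assms(1)] that Suc.prems by simp
  ultimately show ?case using Suc by (cases "d = 0") (simp_all add: add.commute)
qed simp

lemma npaths_unit_level:
  assumes "coprime (m l) r" "l \<le> N" "1 \<le> d" "d \<le> r"
  shows "npaths (l, behind l d) w =
    (\<Sum>p<d. (if (l, behind l p) = w then 1 else 0) + (\<Sum>j\<in>{Suc l..N}. npaths_after (j, behind l p) w))"
  by (rule sum_along_unit_orbit[OF assms(1) _ assms(3,4)])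
     (simp add: npaths_rec_split[OF _ assms(2)] npaths_after_unit_level[OF assms(1)])

lemma npaths_unit_level_origin:
  assumes "coprime (m l) r" "l \<le> N" "fst w \<noteq> l"
  shows "npaths (l, 0) w = (\<Sum>x<r. \<Sum>j\<in>{Suc l..N}. npaths_after (j, x) w)"
proof -
  have "(l, x) \<noteq> w" for x
    using assms(3) by auto
  then show ?thesis
    using npaths_unit_level[OF assms(1,2), of r w] r_pos
      sum_behind(1)[OF assms(1), of "\<lambda>x. \<Sum>j\<in>{Suc l..N}. npaths_after (j, x) w"] by simp
qed

lemma npaths_unit_level_return:
  assumes "coprime (m l) r" "l \<le> N" "k < r"
  shows "npaths (l, k) (l, 0) = 1"
proof -
  obtain d where d: "1 \<le> d" "d \<le> r" "k = behind l d"
    using behind_surj[OF assms(1,3)] .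
  have "(\<Sum>p<d. (if (l, behind l p) = (l, 0) then 1 else 0) +
          (\<Sum>j\<in>{Suc l..N}. npaths_after (j, behind l p) (l, 0))) = (\<Sum>p<d. if p = 0 then 1 else 0)"
  proof (intro sum.cong refl)
    fix p assume "p \<in> {..<d}"
    then have "behind l p = 0 \<longleftrightarrow> p = 0"
      using behind_nonzero[OF assms(1), of p] d(2) by (cases "p = 0") auto
    then show "(if (l, behind l p) = (l, 0) then 1 else 0) +
        (\<Sum>j\<in>{Suc l..N}. npaths_after (j, behind l p) (l, 0)) = (if p = 0 then 1 else 0)"
      by (simp add: npaths_after_to_lower_level)
  qed
  then show ?thesis
    using npaths_unit_level[OF assms(1,2) d(1,2)] d by simp
qed

lemma npaths_after_unit_level_return:
  assumes "coprime (m l) r" "l \<le> N" "x < r"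
  shows "npaths_after (l, x) (l, 0) = 1"
  using npaths_unit_level_return[OF assms] by (simp add: npaths_after_unit_level[OF assms(1)])

lemma npaths_up_one_level:
  assumes "coprime (m l) r" "coprime (m (Suc l)) r" "Suc l \<le> N" "1 \<le> d" "d \<le> r"
  shows "npaths (l, behind l d) (Suc l, 0) = d"
proof -
  have "(\<Sum>j\<in>{Suc l..N}. npaths_after (j, behind l p) (Suc l, 0)) = 1" for p
    using assms(3) behind_less npaths_after_unit_level_return[OF assms(2,3)]
    by (simp add: sum.atLeast_Suc_atMost npaths_after_to_lower_level)
  then show ?thesis
    using npaths_unit_level[OF assms(1) _ assms(4,5)] assms(3) by simp
qed

end

section \<open>The adjacency matrix of \<open>L\<^sub>7\<close>\<close>

locale L7_graph = skew_product 3 r m for r m +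
  fixes n m2inv a1 a2 :: nat
  assumes r_ge_2: "2 \<le> r" and gcd_m3: "gcd (m 3) r = n"
    and coprime_m: "\<And>l. l \<le> 2 \<Longrightarrow> coprime (m l) r"
    and m2inv: "[m 2 * m2inv = 1] (mod r)"
    and a1: "[m 1 * a1 = 1] (mod n)" and a2: "[m 2 * a2 = 1] (mod n)"
begin

lemma n_pos: "0 < n"
  using gcd_m3 r_pos by auto

lemma n_dvd_r: "n dvd r"
  using gcd_m3 by auto

definition R :: nat where
  "R = r div n"

lemma r_eq: "r = n * R"
  unfolding R_def using n_dvd_r by simp

lemma r_eq_rat: "(of_nat r :: rat) = of_nat n * of_nat R"
  using arg_cong[OF r_eq, of "of_nat :: nat \<Rightarrow> rat"] by simp

definition steps_res :: "nat \<Rightarrow> nat \<Rightarrow> nat" where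
  "steps_res a t = nat ((- (int a * int t)) mod int n)"

lemma steps_res_less: "steps_res a t < n"
  unfolding steps_res_def using n_pos by (simp add: nat_less_iff)

lemma steps_res_cong: "\<exists>c. (of_nat (steps_res a t) :: rat) = of_nat n * of_int c - of_nat a * of_nat t"
proof -
  have "int (steps_res a t) = (- (int a * int t)) mod int n"
    unfolding steps_res_def using n_pos by simp
  moreover have "(- (int a * int t)) mod int n = - (int a * int t) - int n * ((- (int a * int t)) div int n)"
    by (simp add: minus_div_mult_eq_mod[symmetric] algebra_simps)
  ultimately have "int (steps_res a t) = int n * (- ((- (int a * int t)) div int n)) - int a * int t"
    by (simp add: algebra_simps)
  then have "(of_nat (steps_res a t) :: rat) = of_nat n * of_int (- ((- (int a * int t)) div int n)) - of_nat a * of_nat t"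
    by (metis (mono_tags) of_int_diff of_int_mult of_int_of_nat_eq)
  then show ?thesis by blast
qed

lemma behind_mod_iff:
  assumes "[m l * a = 1] (mod n)" "t < n"
  shows "behind l p mod n = t \<longleftrightarrow> p mod n = steps_res a t"
proof -
  have ua: "int n dvd (int (m l) * int a - 1)"
    using assms(1) by (metis cong_iff_dvd_diff cong_int_iff of_nat_1 of_nat_mult)
  have "behind l p mod n = t \<longleftrightarrow> int (behind l p) mod int n = int t mod int n"
    using assms(2) by (metis mod_less of_nat_eq_iff zmod_int)
  also have "\<dots> \<longleftrightarrow> int n dvd (- (int p * int (m l)) - int t)"
    unfolding int_behind using n_dvd_r by (simp add: mod_mod_cancel mod_eq_dvd_iff)
  also have "\<dots> \<longleftrightarrow> int n dvd (int p + int a * int t)"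
  proof -
    define X where "X = - (int p * int (m l)) - int t"
    define Y where "Y = int p + int a * int t"
    have "Y = (- int a) * X + (- int p) * (int (m l) * int a - 1)"
      "X = (- int (m l)) * Y + int t * (int (m l) * int a - 1)"
      unfolding X_def Y_def by (simp_all add: algebra_simps)
    then show ?thesis
      using ua unfolding X_def[symmetric] Y_def[symmetric] by (metis dvd_add dvd_mult)
  qed
  also have "\<dots> \<longleftrightarrow> int p mod int n = (- (int a * int t)) mod int n"
    by (simp add: mod_eq_dvd_iff)
  also have "\<dots> \<longleftrightarrow> p mod n = steps_res a t"
    unfolding steps_res_def zmod_int[symmetric] using n_pos by (auto simp: nat_eq_iff2 eq_commute[of "p mod n"])
  finally show ?thesis .
qed

lemma levels_above_0: "{Suc 0..3} = {1, 2, 3 :: nat}"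
  and levels_above_1: "{Suc 1..3} = {2, 3 :: nat}"
  by auto

lemma npaths_after_level3:
  assumes "x < r" "t < n"
  shows "npaths_after (3, x) (3, t) = (if x mod n = t then 1 else 0)"
  using npaths_after_within_level[OF gcd_m3 order_refl assms(2,1)] .

lemma npaths_after_unit_to_level3:
  assumes "j \<le> 2"
  shows "npaths_after (j, x) (3, t) = (if x = 0 then 0 else npaths (j, x) (3, t))"
  using npaths_after_unit_level[OF coprime_m[OF assms]] assms by simp

lemma count_residue_r:
  assumes "c < n"
  shows "(\<Sum>x<r. if x mod n = c then 1 else 0) = R"
  using sum_residue_class[OF assms, where R = R and h = "\<lambda>_. 1::nat"] r_eq by simp

lemma npaths_level2_level3:
  assumes "t < n" "1 \<le> d" "d \<le> r"
  shows "npaths (2, behind 2 d) (3, t) = (\<Sum>p<d. if p mod n = steps_res a2 t then 1 else 0)"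
  using npaths_unit_level[OF coprime_m _ assms(2,3), of 2 "(3, t)"] assms(1)
  by (simp add: npaths_after_level3 behind_less behind_mod_iff[OF a2])

lemma npaths_level2_origin_level3:
  assumes "t < n"
  shows "npaths (2, 0) (3, t) = R"
  using npaths_level2_level3[OF assms, of r] r_pos count_residue_r[OF steps_res_less] by simp

definition weighted_count :: "nat \<Rightarrow> nat" where
  "weighted_count c = (\<Sum>p<r. (r - 1 - p) * (if p mod n = c then 1 else 0))"

lemma sum_npaths_level2_level3:
  assumes "t < n"
  shows "(\<Sum>x\<in>{1..<r}. npaths (2, x) (3, t)) = weighted_count (steps_res a2 t)"
proof -
  have "(\<Sum>x\<in>{1..<r}. npaths (2, x) (3, t)) = (\<Sum>d\<in>{1..<r}. npaths (2, behind 2 d) (3, t))"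
    using sum_behind(2)[OF coprime_m, of 2 "\<lambda>x. npaths (2, x) (3, t)"] by simp
  also have "\<dots> = (\<Sum>d\<in>{1..<r}. \<Sum>p<d. if p mod n = steps_res a2 t then 1 else 0)"
    by (intro sum.cong refl) (simp add: npaths_level2_level3[OF assms])
  also have "\<dots> = (\<Sum>d<r. \<Sum>p<d. if p mod n = steps_res a2 t then 1 else 0)"
    unfolding sum_lessThan_split_0(1)[OF r_pos, of "\<lambda>d. \<Sum>p<d. if p mod n = steps_res a2 t then 1 else 0"]
    by simp
  finally show ?thesis
    unfolding weighted_count_def sum_triangle_lessThan .
qed

lemma npaths_level1_origin_level3:
  assumes "t < n"
  shows "npaths (1, 0) (3, t) = R + weighted_count (steps_res a2 t)"
proof -
  have "npaths (1, 0) (3, t) =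
      (\<Sum>x<r. (if x = 0 then 0 else npaths (2, x) (3, t)) + (if x mod n = t then 1 else 0))"
    using npaths_unit_level_origin[OF coprime_m, of 1 "(3, t)", unfolded levels_above_1] assms
    by (simp add: npaths_after_level3 npaths_after_unit_to_level3)
  also have "\<dots> = (\<Sum>x\<in>{1..<r}. npaths (2, x) (3, t)) + R"
    by (simp only: sum.distrib sum_lessThan_split_0(2)[OF r_pos] count_residue_r[OF assms])
  finally show ?thesis
    using sum_npaths_level2_level3[OF assms] by simp
qed

lemma npaths_level0_origin_level2: "npaths (0, 0) (2, 0) = r + (\<Sum>d\<in>{1..<r}. d)"
proof -
  have "npaths_after (1, x) (2, 0) = (if x = 0 then 0 else npaths (1, x) (2, 0))" for x
    using npaths_after_unit_level[OF coprime_m, of 1] by simp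
  moreover have "npaths_after (2, x) (2, 0) = 1" if "x < r" for x
    using npaths_after_unit_level_return[OF coprime_m _ that, of 2] by simp
  ultimately have "npaths (0, 0) (2, 0) = (\<Sum>x<r. (if x = 0 then 0 else npaths (1, x) (2, 0)) + 1)"
    using npaths_unit_level_origin[OF coprime_m, of 0 "(2, 0)", unfolded levels_above_0]
    by (simp add: npaths_after_to_lower_level)
  also have "\<dots> = (\<Sum>x\<in>{1..<r}. npaths (1, x) (2, 0)) + r"
    by (simp only: sum.distrib sum_lessThan_split_0(2)[OF r_pos]) simp
  also have "(\<Sum>x\<in>{1..<r}. npaths (1, x) (2, 0)) = (\<Sum>d\<in>{1..<r}. npaths (1, behind 1 d) (2, 0))"
    using sum_behind(2)[OF coprime_m, of 1 "\<lambda>x. npaths (1, x) (2, 0)"] by simp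
  also have "(\<Sum>d\<in>{1..<r}. npaths (1, behind 1 d) (2, 0)) = (\<Sum>d\<in>{1..<r}. d)"
    using npaths_up_one_level[OF coprime_m coprime_m, of 1] by (simp add: numeral_2_eq_2)
  finally show ?thesis by simp
qed

definition mu :: nat where
  "mu = m2inv * m 1"

definition scaled :: "nat \<Rightarrow> nat" where
  "scaled q = q * mu mod r"

lemma coprime_mu: "coprime mu r"
proof -
  have "coprime m2inv r"
    using cong_imp_coprime[OF cong_sym[OF m2inv]] by simp
  then show ?thesis
    unfolding mu_def using coprime_m[of 1] by simp
qed

lemma scaled_less: "scaled q < r"
  unfolding scaled_def using r_pos by simp

lemma scaled_nonzero:
  assumes "1 \<le> q" "q < r"
  shows "scaled q \<noteq> 0"
proof
  assume "scaled q = 0"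
  then have "r dvd q"
    using coprime_mu unfolding scaled_def by (metis coprime_commute coprime_dvd_mult_left_iff mod_0_imp_dvd)
  then show False using assms by (auto dest: nat_dvd_not_less)
qed

lemma bij_betw_scaled: "bij_betw scaled {1..<r} {1..<r}"
proof -
  have "inj_on scaled {1..<r}"
  proof (rule inj_onI)
    fix q q' assume "q \<in> {1..<r}" "q' \<in> {1..<r}" "scaled q = scaled q'"
    then have "[q = q'] (mod r)"
      using coprime_mu unfolding scaled_def cong_def[symmetric] by (simp add: cong_mult_rcancel_nat)
    then show "q = q'" using \<open>q \<in> {1..<r}\<close> \<open>q' \<in> {1..<r}\<close> by (simp add: cong_def)
  qed
  moreover have "scaled ` {1..<r} \<subseteq> {1..<r}"
    using scaled_less scaled_nonzero by (auto simp: Suc_le_eq)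
  ultimately show ?thesis by (simp add: bij_betw_def endo_inj_surj)
qed

lemma behind_1_eq: "behind 1 q = behind 2 (scaled q)"
proof -
  have inv: "[int (m 2) * int m2inv = 1] (mod int r)"
    using m2inv by (metis cong_int_iff of_nat_1 of_nat_mult)
  have "[int (scaled q) * int (m 2) = int q * int mu * int (m 2)] (mod int r)"
    unfolding scaled_def by (simp add: cong_def zmod_int mod_mult_left_eq)
  also have "int q * int mu * int (m 2) = int q * int (m 1) * (int (m 2) * int m2inv)"
    unfolding mu_def by (simp add: algebra_simps)
  also have "[\<dots> = int q * int (m 1) * 1] (mod int r)"
    by (rule cong_mult[OF cong_refl inv])
  finally have "[- (int (scaled q) * int (m 2)) = - (int q * int (m 1))] (mod int r)"
    by (simp add: cong_minus_minus_iff)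
  then have "int (behind 2 (scaled q)) = int (behind 1 q)"
    unfolding int_behind cong_def by simp
  then show ?thesis by simp
qed

lemma npaths_level2_from_level1:
  assumes "t < n" "1 \<le> q" "q < r"
  shows "npaths (2, behind 1 q) (3, t) = scaled q div n + (if steps_res a2 t < scaled q mod n then 1 else 0)"
  unfolding behind_1_eq
  using npaths_level2_level3[OF assms(1), of "scaled q"] scaled_nonzero[OF assms(2,3)] scaled_less[of q]
    count_residue_lessThan[OF steps_res_less] by simp

lemma npaths_level1_level3:
  assumes "t < n" "1 \<le> d" "d \<le> r"
  shows "npaths (1, behind 1 d) (3, t) =
    (\<Sum>p<d. (if behind 1 p = 0 then 0 else npaths (2, behind 1 p) (3, t)) +
            (if p mod n = steps_res a1 t then 1 else 0))"
  using npaths_unit_level[OF coprime_m _ assms(2,3), of 1 "(3, t)", unfolded levels_above_1] assms(1)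
  by (simp add: npaths_after_level3 npaths_after_unit_to_level3 behind_less behind_mod_iff[OF a1]
      del: One_nat_def)

text \<open>The part of \<open>\<Sum>x\<in>{1..<r}. npaths (1, x) (3, t)\<close> contributed by paths through level \<open>2\<close>.\<close>

definition inner_count :: "nat \<Rightarrow> nat" where
  "inner_count t = (\<Sum>q\<in>{1..<r}. (r - 1 - q) *
      (scaled q div n + (if steps_res a2 t < scaled q mod n then 1 else 0)))"

lemma sum_npaths_level1_level3:
  assumes "t < n"
  shows "(\<Sum>x\<in>{1..<r}. npaths (1, x) (3, t)) = inner_count t + weighted_count (steps_res a1 t)"
proof -
  define g where "g p = (if behind 1 p = 0 then 0 else npaths (2, behind 1 p) (3, t))" for p
  define h where "h p = (if p mod n = steps_res a1 t then 1 else (0::nat))" for p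
  have "(\<Sum>x\<in>{1..<r}. npaths (1, x) (3, t)) = (\<Sum>d\<in>{1..<r}. npaths (1, behind 1 d) (3, t))"
    using sum_behind(2)[OF coprime_m, of 1 "\<lambda>x. npaths (1, x) (3, t)"] by simp
  also have "\<dots> = (\<Sum>d\<in>{1..<r}. \<Sum>p<d. g p + h p)"
    by (intro sum.cong refl) (simp add: npaths_level1_level3[OF assms] g_def h_def del: One_nat_def)
  also have "\<dots> = (\<Sum>d<r. \<Sum>p<d. g p + h p)"
    unfolding sum_lessThan_split_0(1)[OF r_pos, of "\<lambda>d. \<Sum>p<d. g p + h p"] by simp
  also have "\<dots> = (\<Sum>p<r. (r - 1 - p) * g p) + weighted_count (steps_res a1 t)"
    unfolding sum_triangle_lessThan weighted_count_def h_def by (simp add: distrib_left sum.distrib)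
  also have "(\<Sum>p<r. (r - 1 - p) * g p) = inner_count t"
  proof -
    have "g q = scaled q div n + (if steps_res a2 t < scaled q mod n then 1 else 0)" if "q \<in> {1..<r}" for q
      using that behind_nonzero[OF coprime_m, of 1 q]
      by (simp add: g_def npaths_level2_from_level1[OF assms] del: One_nat_def)
    moreover have "g 0 = 0" by (simp add: g_def)
    ultimately show ?thesis
      unfolding sum_lessThan_split_0(1)[OF r_pos] inner_count_def by (auto intro: sum.cong)
  qed
  finally show ?thesis .
qed

lemma npaths_level0_origin_level3:
  assumes "t < n"
  shows "npaths (0, 0) (3, t) =
    R + weighted_count (steps_res a1 t) + inner_count t + weighted_count (steps_res a2 t)"
proof -
  have "npaths (0, 0) (3, t) = (\<Sum>x<r. \<Sum>j\<in>{1, 2, 3}. npaths_after (j, x) (3, t))"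
    using npaths_unit_level_origin[OF coprime_m, of 0 "(3, t)", unfolded levels_above_0] by simp
  also have "\<dots> = (\<Sum>x<r. (if x = 0 then 0 else npaths (1, x) (3, t) + npaths (2, x) (3, t)) +
      (if x mod n = t then 1 else 0))"
    using assms by (intro sum.cong refl) (simp add: npaths_after_level3 npaths_after_unit_to_level3)
  also have "\<dots> = (\<Sum>x\<in>{1..<r}. npaths (1, x) (3, t)) + (\<Sum>x\<in>{1..<r}. npaths (2, x) (3, t)) + R"
    by (simp only: sum.distrib sum_lessThan_split_0(2)[OF r_pos] count_residue_r[OF assms])
  finally show ?thesis
    using sum_npaths_level1_level3[OF assms] sum_npaths_level2_level3[OF assms] by simp
qed

lemma weighted_count_eq:
  assumes "c < n"
  shows "(of_nat (weighted_count c) :: rat) =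
    of_nat R * (of_nat r - 1 - of_nat c) - of_nat n * (of_nat R * (of_nat R - 1) / 2)"
proof -
  have "weighted_count c = (\<Sum>p<n * R. if p mod n = c then r - 1 - p else 0)"
    unfolding weighted_count_def r_eq[symmetric] by (intro sum.cong) auto
  also have "\<dots> = (\<Sum>j<R. r - 1 - (c + n * j))"
    by (rule sum_residue_class[OF assms])
  finally have "(of_nat (weighted_count c) :: rat) = (\<Sum>j<R. of_nat (r - 1 - (c + n * j)))"
    by simp
  also have "\<dots> = (\<Sum>j<R. of_nat r - 1 - of_nat c - of_nat n * of_nat j)"
  proof (intro sum.cong refl)
    fix j assume "j \<in> {..<R}"
    then have "n * Suc j \<le> n * R" by (intro mult_le_mono2) simp
    moreover have "c + n * j < n * Suc j" using assms by simp
    ultimately have "c + n * j + 1 \<le> r" using r_eq by simp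
    then show "(of_nat (r - 1 - (c + n * j)) :: rat) = of_nat r - 1 - of_nat c - of_nat n * of_nat j"
      by (simp add: of_nat_diff)
  qed
  finally show ?thesis
    by (simp add: sum_subtractf sum_distrib_left[symmetric] sum_of_nat_lessThan)
qed

lemma npaths_origin_return: "l \<le> 2 \<Longrightarrow> npaths (l, 0) (l, 0) = 1"
  using npaths_unit_level_return[OF coprime_m _ r_pos] by simp

lemma npaths_origin_up: "l \<le> 1 \<Longrightarrow> npaths (l, 0) (Suc l, 0) = r"
  using npaths_up_one_level[OF coprime_m coprime_m _ _ order_refl, of l] r_pos by simp

lemma npaths_level2_origin_level3_eq: "t < n \<Longrightarrow> (of_nat (npaths (2, 0) (3, t)) :: rat) = of_nat r / of_nat n"
  using npaths_level2_origin_level3 r_eq_rat n_pos by simp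

lemma npaths_level3: "s < n \<Longrightarrow> t < n \<Longrightarrow> npaths (3, s) (3, t) = (if s = t then 1 else 0)"
  using npaths_within_level[OF gcd_m3 order_refl] n_dvd_r r_pos
  by (simp add: order_less_le_trans[OF _ dvd_imp_le])

lemma npaths_level0_origin_level2_eq: "(of_nat (npaths (0, 0) (2, 0)) :: rat) = of_nat r * (of_nat r + 1) / 2"
proof -
  have "(\<Sum>d\<in>{1..<r}. (of_nat d :: rat)) = of_nat r * (of_nat r - 1) / 2"
    using sum_lessThan_split_0(1)[OF r_pos, of "of_nat :: nat \<Rightarrow> rat"] sum_of_nat_lessThan[where 'a = rat, of r]
    by simp
  then show ?thesis
    unfolding npaths_level0_origin_level2 by (simp add: field_simps)
qed

lemma npaths_level1_origin_level3_eq: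
  assumes "t < n"
  shows "(of_nat (npaths (1, 0) (3, t)) :: rat) =
    of_nat r * (of_nat r + of_nat n) / (2 * of_nat n) - of_nat r / of_nat n * of_nat (steps_res a2 t)"
  unfolding npaths_level1_origin_level3[OF assms] of_nat_add weighted_count_eq[OF steps_res_less] r_eq_rat
  using n_pos by (simp add: field_simps)

lemma npaths_level1_origin_level3_cong:
  assumes "t < n"
  shows "\<exists>z. (of_nat (npaths (1, 0) (3, t)) :: rat) - (of_nat r * (of_nat r - of_nat n) / (2 * of_nat n)
    + of_nat a2 * of_nat t * (of_nat r / of_nat n)) = of_nat r * of_int z"
proof -
  obtain c where c: "(of_nat (steps_res a2 t) :: rat) = of_nat n * of_int c - of_nat a2 * of_nat t"
    using steps_res_cong by blast
  have "(of_nat (npaths (1, 0) (3, t)) :: rat) - (of_nat r * (of_nat r - of_nat n) / (2 * of_nat n)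
      + of_nat a2 * of_nat t * (of_nat r / of_nat n)) = of_nat r * of_int (1 - c)"
    unfolding npaths_level1_origin_level3_eq[OF assms] c using n_pos by (simp add: field_simps)
  then show ?thesis by blast
qed

section \<open>The entries \<open>x\<^sub>t\<close>\<close>

definition scaled_res :: "nat \<Rightarrow> nat" where
  "scaled_res q = scaled q mod n"

lemma scaled_res_less: "scaled_res q < n"
  unfolding scaled_res_def using n_pos by simp

lemma scaled_res_eq: "scaled_res q = q * mu mod n"
  unfolding scaled_res_def scaled_def using n_dvd_r by (simp add: mod_mod_cancel)

lemma scaled_res_eq_0_iff: "scaled_res q = 0 \<longleftrightarrow> n dvd q"
proof -
  have "coprime mu n"
    using coprime_mu n_dvd_r by (metis coprime_mult_right_iff dvd_def)
  then show ?thesis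
    unfolding scaled_res_eq by (metis coprime_commute coprime_dvd_mult_left_iff dvd_eq_mod_eq_0)
qed

lemma Lambda_eq:
  assumes "h < n"
  shows "Lambda r n (m 2) a1 h = {l \<in> {1..r-2}. scaled_res (l + 1) = h}"
proof -
  have m2inv_n: "[m 2 * m2inv = 1] (mod n)"
    using cong_dvd_modulus_nat[OF m2inv n_dvd_r] .
  have "[int l = int (m 2) * int a1 * int h - 1] (mod int n) \<longleftrightarrow> [l + 1 = m 2 * a1 * h] (mod n)" for l
    by (simp add: cong_iff_dvd_diff algebra_simps flip: cong_int_iff)
  moreover have "[l + 1 = m 2 * a1 * h] (mod n) \<longleftrightarrow> [(l + 1) * mu = h] (mod n)" for l
  proof
    assume c: "[l + 1 = m 2 * a1 * h] (mod n)"
    have "[(l + 1) * mu = (m 2 * a1 * h) * mu] (mod n)" by (rule cong_scalar_right[OF c])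
    also have "(m 2 * a1 * h) * mu = h * ((m 2 * m2inv) * (m 1 * a1))"
      unfolding mu_def by (simp add: algebra_simps)
    also have "[h * ((m 2 * m2inv) * (m 1 * a1)) = h * (1 * 1)] (mod n)"
      by (intro cong_mult cong_refl m2inv_n a1)
    finally show "[(l + 1) * mu = h] (mod n)" by simp
  next
    assume c: "[(l + 1) * mu = h] (mod n)"
    have "[l + 1 = (l + 1) * ((m 2 * m2inv) * (m 1 * a1))] (mod n)"
      using cong_mult[OF cong_refl cong_mult[OF m2inv_n a1], of "l + 1"] by (simp add: cong_sym_eq)
    also have "(l + 1) * ((m 2 * m2inv) * (m 1 * a1)) = ((l + 1) * mu) * (m 2 * a1)"
      unfolding mu_def by (simp add: algebra_simps)
    also have "[((l + 1) * mu) * (m 2 * a1) = h * (m 2 * a1)] (mod n)"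
      by (rule cong_scalar_right[OF c])
    finally show "[l + 1 = m 2 * a1 * h] (mod n)" by (simp add: algebra_simps)
  qed
  ultimately show ?thesis
    unfolding Lambda_def scaled_res_eq cong_def using assms by auto
qed

lemma sum_Lambda:
  assumes "H \<subseteq> {..<n}"
  shows "(\<Sum>h\<in>H. \<Sum>l\<in>Lambda r n (m 2) a1 h. F l h) =
    (\<Sum>l\<in>{l \<in> {1..r-2}. scaled_res (l + 1) \<in> H}. (F l (scaled_res (l + 1)) :: 'a::comm_monoid_add))"
proof -
  define S where "S = {l \<in> {1..r-2}. scaled_res (l + 1) \<in> H}"
  have "(\<Sum>h\<in>H. \<Sum>l\<in>Lambda r n (m 2) a1 h. F l h) =
      (\<Sum>h\<in>H. \<Sum>l\<in>{x \<in> S. scaled_res (x + 1) = h}. F l (scaled_res (l + 1)))"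
  proof (rule sum.cong[OF refl])
    fix h assume "h \<in> H"
    then have "Lambda r n (m 2) a1 h = {x \<in> S. scaled_res (x + 1) = h}"
      using Lambda_eq[of h] assms unfolding S_def by auto
    then show "(\<Sum>l\<in>Lambda r n (m 2) a1 h. F l h) = (\<Sum>l\<in>{x \<in> S. scaled_res (x + 1) = h}. F l (scaled_res (l + 1)))"
      by (intro sum.cong) auto
  qed
  also have "\<dots> = (\<Sum>l\<in>S. F l (scaled_res (l + 1)))"
    using assms finite_subset by (intro sum.group) (auto simp: S_def)
  finally show ?thesis unfolding S_def .
qed

lemma k_idx_eq:
  assumes "1 \<le> l" "l + 2 \<le> r"
  shows "int r * k_idx r (m 1) m2inv l = int (scaled (l + 1)) - int mu * (int l + 1)"
proof -
  define v where "v = int mu * (int l + 1)"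
  have "int (scaled (l + 1)) = v mod int r"
    unfolding v_def scaled_def by (simp add: zmod_int algebra_simps)
  moreover have "scaled (l + 1) \<noteq> 0" using scaled_nonzero assms by simp
  ultimately have "\<not> int r dvd v" by auto
  then have "k_idx r (m 1) m2inv l = - (v div int r)"
    using the_shift_into_range[of "int r" v] r_pos
    unfolding k_idx_def v_def mu_def by (simp add: algebra_simps)
  then show ?thesis
    using \<open>int (scaled (l + 1)) = v mod int r\<close> unfolding v_def
    by (simp add: minus_div_mult_eq_mod[symmetric] algebra_simps)
qed

lemma X_val_cubic_terms:
  "- of_nat m2inv * of_nat (m 1) * of_nat r * (of_nat r - 2) * (of_nat r - 1) / (3 * of_nat n)
     + (\<Sum>l\<in>{1..r-2}. of_nat l * (of_nat r * (1 - of_int (k_idx r (m 1) m2inv l)) / of_nat n))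
   = (\<Sum>l\<in>{1..r-2}. of_nat l * (of_nat r - of_nat (scaled (l + 1))) / (of_nat n :: rat))"
proof -
  have nn: "(of_nat n :: rat) \<noteq> 0" using n_pos by simp
  have "of_nat l * (of_nat r * (1 - of_int (k_idx r (m 1) m2inv l)) / of_nat n)
      = of_nat l * (of_nat r - of_nat (scaled (l + 1))) / of_nat n
        + (of_nat mu / of_nat n) * (of_nat l * (of_nat l + (1::rat)))"
    if "l \<in> {1..r-2}" for l
  proof -
    have "1 \<le> l" "l + 2 \<le> r" using that r_ge_2 by auto
    from arg_cong[OF k_idx_eq[OF this], of "of_int :: int \<Rightarrow> rat"]
    have "(of_nat r :: rat) * (1 - of_int (k_idx r (m 1) m2inv l)) =
        of_nat r - of_nat (scaled (l + 1)) + of_nat mu * (of_nat l + 1)"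
      by (simp add: right_diff_distrib)
    then show ?thesis using nn by (simp add: field_simps)
  qed
  then have split: "(\<Sum>l\<in>{1..r-2}. of_nat l * (of_nat r * (1 - of_int (k_idx r (m 1) m2inv l)) / of_nat n))
     = (\<Sum>l\<in>{1..r-2}. of_nat l * (of_nat r - of_nat (scaled (l + 1))) / of_nat n)
       + (of_nat mu / of_nat n) * (\<Sum>l\<in>{1..r-2}. of_nat l * (of_nat l + (1::rat)))"
    by (simp add: sum.distrib sum_distrib_left)
  have cubic: "(\<Sum>l\<in>{1..r-2}. of_nat l * (of_nat l + 1) :: rat) = (of_nat r - 2) * (of_nat r - 1) * of_nat r / 3"
    using sum_of_nat_mult_Suc[of "r - 2"] r_ge_2 by (simp add: of_nat_diff)
  show ?thesis
    unfolding split cubic mu_def using nn by (simp add: field_simps)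
qed

lemma X_val_Lambda_terms:
  "(\<Sum>h\<in>{0..n-1}. \<Sum>l\<in>Lambda r n (m 2) a1 h. of_nat l * of_nat h / (of_nat n :: rat))
     = (\<Sum>l\<in>{1..r-2}. of_nat l * of_nat (scaled_res (l + 1)) / of_nat n)"
  "(\<Sum>h\<in>{s_idx n a2 t + 1..n-1}. \<Sum>l\<in>Lambda r n (m 2) a1 h. (of_nat l :: rat))
     = (\<Sum>l\<in>{1..r-2}. if s_idx n a2 t < scaled_res (l + 1) then of_nat l else 0)"
proof -
  have "{0..n-1} \<subseteq> {..<n}" "{s_idx n a2 t + 1..n-1} \<subseteq> {..<n}"
    using n_pos by auto
  note sums = sum_Lambda[OF this(1)] sum_Lambda[OF this(2)]
  have "{l \<in> {1..r-2}. scaled_res (l + 1) \<in> {0..n-1}} = {1..r-2}"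
    using scaled_res_less n_pos by (force simp: Suc_le_eq le_diff_conv2)
  then show "(\<Sum>h\<in>{0..n-1}. \<Sum>l\<in>Lambda r n (m 2) a1 h. of_nat l * of_nat h / (of_nat n :: rat))
       = (\<Sum>l\<in>{1..r-2}. of_nat l * of_nat (scaled_res (l + 1)) / of_nat n)"
    by (simp only: sums)
  have "{l \<in> {1..r-2}. scaled_res (l + 1) \<in> {s_idx n a2 t + 1..n-1}} =
      {l \<in> {1..r-2}. s_idx n a2 t < scaled_res (l + 1)}"
    using scaled_res_less n_pos by (force simp: Suc_le_eq le_diff_conv2)
  then show "(\<Sum>h\<in>{s_idx n a2 t + 1..n-1}. \<Sum>l\<in>Lambda r n (m 2) a1 h. (of_nat l :: rat))
       = (\<Sum>l\<in>{1..r-2}. if s_idx n a2 t < scaled_res (l + 1) then of_nat l else 0)"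
    by (simp only: sums sum.inter_filter[OF finite_atLeastAtMost])
qed

lemma X_val_eq_sum:
  "X_val r n m m2inv a1 a2 t = (\<Sum>q\<in>{1..<r}. of_nat (q - 1) * of_nat r / of_nat n
      - of_nat (q - 1) * of_nat (scaled q div n) - of_nat (q - 1) * (if s_idx n a2 t < scaled_res q then 1 else 0))"
proof -
  have "X_val r n m m2inv a1 a2 t = (\<Sum>l\<in>{1..r-2}. of_nat l * (of_nat r - of_nat (scaled (l + 1))) / of_nat n)
      + (\<Sum>l\<in>{1..r-2}. of_nat l * of_nat (scaled_res (l + 1)) / of_nat n)
      - (\<Sum>l\<in>{1..r-2}. if s_idx n a2 t < scaled_res (l + 1) then of_nat l else 0)"
    unfolding X_val_def X_val_cubic_terms[symmetric] X_val_Lambda_terms[symmetric] ..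
  also have "\<dots> = (\<Sum>l\<in>{1..r-2}. of_nat l * (of_nat r - of_nat (scaled (l + 1))) / of_nat n
      + of_nat l * of_nat (scaled_res (l + 1)) / of_nat n - (if s_idx n a2 t < scaled_res (l + 1) then of_nat l else 0))"
    by (simp add: sum.distrib sum_subtractf)
  also have "\<dots> = (\<Sum>q\<in>{1..<r}. of_nat (q - 1) * (of_nat r - of_nat (scaled (q - 1 + 1))) / of_nat n
      + of_nat (q - 1) * of_nat (scaled_res (q - 1 + 1)) / of_nat n
      - (if s_idx n a2 t < scaled_res (q - 1 + 1) then of_nat (q - 1) else 0))"
    by (rule sum_atLeastAtMost_shift[OF r_ge_2]) simp
  also have "\<dots> = (\<Sum>q\<in>{1..<r}. of_nat (q - 1) * (of_nat r - of_nat (scaled q)) / of_nat n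
      + of_nat (q - 1) * of_nat (scaled_res q) / of_nat n - (if s_idx n a2 t < scaled_res q then of_nat (q - 1) else 0))"
    by (intro sum.cong) auto
  also have "\<dots> = (\<Sum>q\<in>{1..<r}. of_nat (q - 1) * of_nat r / of_nat n - of_nat (q - 1) * of_nat (scaled q div n)
      - of_nat (q - 1) * (if s_idx n a2 t < scaled_res q then 1 else 0))"
  proof (intro sum.cong refl)
    fix q
    have "(of_nat (scaled q) :: rat) = of_nat n * of_nat (scaled q div n) + of_nat (scaled_res q)"
      unfolding scaled_res_def by (metis div_mult_mod_eq mult.commute of_nat_add of_nat_mult)
    then show "of_nat (q - 1) * (of_nat r - of_nat (scaled q)) / of_nat n
        + of_nat (q - 1) * of_nat (scaled_res q) / of_nat n - (if s_idx n a2 t < scaled_res q then of_nat (q - 1) else 0)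
      = of_nat (q - 1) * of_nat r / of_nat n - of_nat (q - 1) * of_nat (scaled q div n)
        - of_nat (q - 1) * (if s_idx n a2 t < scaled_res q then 1 else (0::rat))"
      using n_pos by (simp add: field_simps)
  qed
  finally show ?thesis .
qed

lemma scaled_reflect:
  assumes "1 \<le> q" "q < r"
  shows "scaled (r - q) = r - scaled q"
proof -
  have nz: "int q * int mu mod int r \<noteq> 0"
    using scaled_nonzero[OF assms] unfolding scaled_def by (metis of_nat_0 of_nat_eq_iff of_nat_mult zmod_int)
  have "int (r - q) * int mu = - (int q * int mu) + int mu * int r"
    using assms by (simp add: of_nat_diff algebra_simps)
  then have "int (scaled (r - q)) = (- (int q * int mu) + int mu * int r) mod int r"
    unfolding scaled_def by (simp add: zmod_int)
  also have "\<dots> = (- (int q * int mu)) mod int r"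
    by (rule mod_mult_self1)
  also have "\<dots> = int r - (int q * int mu) mod int r"
    using nz by (simp add: zmod_zminus1_eq_if)
  also have "\<dots> = int (r - scaled q)"
    using scaled_less[of q] unfolding scaled_def by (simp add: of_nat_diff zmod_int)
  finally show ?thesis by simp
qed

lemma scaled_res_reflect:
  assumes "1 \<le> q" "q < r"
  shows "scaled_res (r - q) = (if scaled_res q = 0 then 0 else n - scaled_res q)"
proof -
  have "int (scaled_res (r - q)) = (int r - int (scaled q)) mod int n"
    unfolding scaled_res_def scaled_reflect[OF assms] using scaled_less[of q] by (simp add: zmod_int of_nat_diff)
  also have "\<dots> = (- int (scaled q)) mod int n"
    using n_dvd_r by (metis diff_0 mod_0_imp_dvd mod_diff_left_eq of_nat_dvd_iff dvd_imp_mod_0 of_nat_0)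
  also have "\<dots> = int (if scaled_res q = 0 then 0 else n - scaled_res q)"
    unfolding scaled_res_def using n_pos by (auto simp: zmod_zminus1_eq_if zmod_int of_nat_diff)
  finally show ?thesis by simp
qed

lemma steps_res_add_s_idx: "steps_res a t + s_idx n a t = n - 1"
proof -
  have "int (steps_res a t) + int (s_idx n a t) = int n - 1"
    unfolding steps_res_def s_idx_def using n_pos neg_mod_add_pred_mod[of "int n" "int a * int t"] by simp
  then show ?thesis by linarith
qed

text \<open>The reflection \<open>q \<mapsto> r - q\<close> turns the threshold \<open>steps_res a2 t\<close> of \<open>inner_count\<close>
  into the threshold \<open>s_idx n a2 t\<close> of \<open>X_val\<close>.\<close>

lemma indicator_reflect:
  assumes "1 \<le> q" "q < r"
  shows "(if steps_res a2 t < scaled_res (r - q) then 1 else 0) + (if s_idx n a2 t < scaled_res q then 1 else 0)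
     = (1::rat) - (if n dvd q then 1 else 0)"
  using scaled_res_reflect[OF assms] steps_res_add_s_idx[of a2 t] scaled_res_less[of q]
    scaled_res_eq_0_iff[of q] n_pos
  by (cases "scaled_res q = 0") auto

lemma sum_scaled_div:
  "(\<Sum>q\<in>{1..<r}. of_nat (scaled q div n) :: rat) = of_nat n * (of_nat R * (of_nat R - 1) / 2)"
proof -
  have "(\<Sum>q\<in>{1..<r}. scaled q div n) = (\<Sum>d\<in>{1..<r}. d div n)"
    using sum.reindex_bij_betw[OF bij_betw_scaled, of "\<lambda>d. d div n"] .
  also have "\<dots> = (\<Sum>d<R * n. d div n)"
    using sum_lessThan_split_0(1)[OF r_pos, of "\<lambda>d. d div n"] r_eq by (simp add: mult.commute)
  finally have "(\<Sum>q\<in>{1..<r}. scaled q div n) = n * (\<Sum>j<R. j)"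
    unfolding sum_div_lessThan .
  then have "(of_nat (\<Sum>q\<in>{1..<r}. scaled q div n) :: rat) = of_nat (n * (\<Sum>j<R. j))"
    by (simp only:)
  then have "(\<Sum>q\<in>{1..<r}. of_nat (scaled q div n) :: rat) = of_nat n * (\<Sum>j<R. of_nat j)"
    by (simp only: of_nat_sum of_nat_mult)
  then show ?thesis by (simp add: sum_of_nat_lessThan)
qed

lemma sum_pred_multiples:
  "(\<Sum>q\<in>{1..<r}. of_nat (q - 1) * (if n dvd q then 1 else 0) :: rat)
     = of_nat n * (of_nat R * (of_nat R - 1) / 2) - of_nat R + 1"
proof -
  have "(\<Sum>q\<in>{1..<r}. of_nat (q - 1) * (if n dvd q then 1 else 0) :: rat)
      = (\<Sum>q\<in>{1..<r}. if q mod n = 0 then of_nat q - 1 else 0)"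
    by (intro sum.cong) (auto simp: of_nat_diff)
  also have "\<dots> = (\<Sum>q<r. if q mod n = 0 then of_nat q - 1 else 0) + 1"
    using sum_lessThan_split_0(1)[OF r_pos, of "\<lambda>q. if q mod n = 0 then of_nat q - 1 else (0::rat)"]
    by simp
  also have "(\<Sum>q<r. if q mod n = 0 then of_nat q - 1 else 0) = (\<Sum>j<R. of_nat (0 + n * j) - (1::rat))"
    using sum_residue_class[OF n_pos, where R = R and h = "\<lambda>q. of_nat q - (1::rat)"]
    unfolding r_eq[symmetric] .
  also have "\<dots> = of_nat n * (\<Sum>j<R. of_nat j) - of_nat R"
    by (simp add: sum_subtractf sum_distrib_left)
  finally show ?thesis by (simp add: sum_of_nat_lessThan)
qed

lemma inner_count_eq_sum:
  "of_nat (inner_count t) =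
     (\<Sum>q\<in>{1..<r}. of_nat (r - 1 - q) * of_nat (scaled q div n))
     + (\<Sum>q\<in>{1..<r}. of_nat (q - 1) * (if steps_res a2 t < scaled_res (r - q) then 1 else 0) :: rat)"
proof -
  have "(\<Sum>q\<in>{1..<r}. of_nat (r - 1 - q) * (if steps_res a2 t < scaled_res q then 1 else 0))
      = (\<Sum>q\<in>{1..<r}. of_nat (q - 1) * (if steps_res a2 t < scaled_res (r - q) then 1 else (0::rat)))"
    by (rule sum.reindex_bij_witness[where i = "\<lambda>q. r - q" and j = "\<lambda>q. r - q"]) auto
  then show ?thesis
    unfolding inner_count_def scaled_res_def[symmetric] of_nat_sum of_nat_mult of_nat_add
    by (simp add: distrib_left sum.distrib of_nat_indicator)
qed

lemma inner_count_eq_X_val: "of_nat (inner_count t) = X_val r n m m2inv a1 a2 t"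
proof -
  have "of_nat (inner_count t) - X_val r n m m2inv a1 a2 t =
      (\<Sum>q\<in>{1..<r}. (of_nat r - 2) * of_nat (scaled q div n) - of_nat (q - 1) * of_nat r / of_nat n
        + of_nat (q - 1) - of_nat (q - 1) * (if n dvd q then 1 else 0))"
    unfolding inner_count_eq_sum X_val_eq_sum sum_subtractf[symmetric] sum.distrib[symmetric]
  proof (intro sum.cong refl)
    fix q assume "q \<in> {1..<r}"
    then have q: "1 \<le> q" "q < r" by auto
    have alg: "b * d + a * E - (a * x / y - a * d - a * S) = (z - 2) * d - a * x / y + a - a * Z"
      if "b = z - 2 - a" "E = 1 - Z - S" for a b d E S Z x y z :: rat
      unfolding that by (simp add: algebra_simps)
    show "of_nat (r - 1 - q) * of_nat (scaled q div n)
        + of_nat (q - 1) * (if steps_res a2 t < scaled_res (r - q) then 1 else 0)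
        - (of_nat (q - 1) * of_nat r / of_nat n - of_nat (q - 1) * of_nat (scaled q div n)
           - of_nat (q - 1) * (if s_idx n a2 t < scaled_res q then 1 else 0))
      = (of_nat r - 2) * of_nat (scaled q div n) - of_nat (q - 1) * of_nat r / of_nat n
        + of_nat (q - 1) - of_nat (q - 1) * (if n dvd q then 1 else (0::rat))"
      by (rule alg) (use q indicator_reflect[OF q, of t] in \<open>simp_all add: of_nat_diff algebra_simps\<close>)
  qed
  also have "\<dots> = (of_nat r - 2) * (\<Sum>q\<in>{1..<r}. of_nat (scaled q div n))
      - (\<Sum>q\<in>{1..<r}. of_nat (q - 1)) * of_nat r / of_nat n + (\<Sum>q\<in>{1..<r}. of_nat (q - 1))
      - (\<Sum>q\<in>{1..<r}. of_nat (q - 1) * (if n dvd q then 1 else 0))"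
    by (simp only: sum.distrib sum_subtractf sum_distrib_left sum_distrib_right sum_divide_distrib)
  also have "\<dots> = 0"
    unfolding sum_scaled_div sum_pred_atLeastLessThan[OF r_pos] sum_pred_multiples r_eq_rat
    using n_pos by (simp add: field_simps)
  finally show ?thesis by simp
qed

lemma npaths_level0_origin_level3_eq:
  assumes "t < n"
  shows "\<exists>z. (of_nat (npaths (0, 0) (3, t)) :: rat) - X_val r n m m2inv a1 a2 t
    - of_nat r / of_nat n * (of_nat a1 * of_nat t + of_nat a2 * of_nat t - 1) = of_nat r * of_int z"
proof -
  obtain c1 c2 where c: "(of_nat (steps_res a1 t) :: rat) = of_nat n * of_int c1 - of_nat a1 * of_nat t"
    "(of_nat (steps_res a2 t) :: rat) = of_nat n * of_int c2 - of_nat a2 * of_nat t"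
    using steps_res_cong by meson
  have "(of_nat (npaths (0, 0) (3, t)) :: rat) - X_val r n m m2inv a1 a2 t
      - of_nat r / of_nat n * (of_nat a1 * of_nat t + of_nat a2 * of_nat t - 1) = of_nat r * of_int (int R + 1 - c1 - c2)"
    unfolding npaths_level0_origin_level3[OF assms] of_nat_add inner_count_eq_X_val
      weighted_count_eq[OF steps_res_less] c r_eq_rat
    using n_pos by (simp add: field_simps)
  then show ?thesis by blast
qed

end

theorem lemma3p5:
  fixes r n m2inv a1 a2 :: nat and m :: "nat \<Rightarrow> nat"
  assumes "r \<ge> 2" and "n \<ge> 1"
    and "gcd (m 3) r = n" and "gcd (m 0) r = 1" and "gcd (m 1) r = 1" and "gcd (m 2) r = 1"
    and "m2inv < r" and "[m 2 * m2inv = 1] (mod r)"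
    and "a1 < n" and "[m 1 * a1 = 1] (mod n)"
    and "a2 < n" and "[m 2 * a2 = 1] (mod n)"
  shows
    "L_adj 3 r m (0,0) (0,0) = 1 \<and> L_adj 3 r m (0,0) (1,0) = r
     \<and> (of_nat (L_adj 3 r m (0,0) (2,0)) :: rat) = of_nat r * (of_nat r + 1) / 2
     \<and> (\<forall>t<n. \<exists>z::int. (of_nat (L_adj 3 r m (0,0) (3,t)) :: rat) - X_val r n m m2inv a1 a2 t
            - (of_nat r / of_nat n) * (of_nat a1 * of_nat t + of_nat a2 * of_nat t - 1)
            = of_nat r * of_int z)
     \<and> L_adj 3 r m (1,0) (0,0) = 0 \<and> L_adj 3 r m (1,0) (1,0) = 1 \<and> L_adj 3 r m (1,0) (2,0) = r
     \<and> (of_nat (L_adj 3 r m (1,0) (3,0)) :: rat) = of_nat r * (of_nat r + of_nat n) / (2 * of_nat n)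
     \<and> (\<forall>t. 1 \<le> t \<and> t < n \<longrightarrow> (\<exists>z::int. (of_nat (L_adj 3 r m (1,0) (3,t)) :: rat)
            - (of_nat r * (of_nat r - of_nat n) / (2 * of_nat n)
               + of_nat a2 * of_nat t * (of_nat r / of_nat n))
            = of_nat r * of_int z))
     \<and> L_adj 3 r m (2,0) (0,0) = 0 \<and> L_adj 3 r m (2,0) (1,0) = 0 \<and> L_adj 3 r m (2,0) (2,0) = 1
     \<and> (\<forall>t<n. (of_nat (L_adj 3 r m (2,0) (3,t)) :: rat) = of_nat r / of_nat n)
     \<and> (\<forall>s<n. L_adj 3 r m (3,s) (0,0) = 0 \<and> L_adj 3 r m (3,s) (1,0) = 0
             \<and> L_adj 3 r m (3,s) (2,0) = 0
             \<and> (\<forall>t<n. L_adj 3 r m (3,s) (3,t) = (if s = t then 1 else 0)))"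
proof -
  have "coprime (m l) r" if "l \<le> 2" for l
    using that assms(4-6) by (auto simp: coprime_iff_gcd_eq_1 le_Suc_eq numeral_2_eq_2)
  then interpret L7_graph r m n m2inv a1 a2
    using assms by unfold_locales auto
  have "steps_res a2 0 = 0" by (simp add: steps_res_def)
  then show ?thesis
    unfolding L_adj_def
    using npaths_origin_return npaths_origin_up[of 0] npaths_origin_up[of 1] npaths_level0_origin_level2_eq
      npaths_level0_origin_level3_eq npaths_level1_origin_level3_eq[of 0] npaths_level1_origin_level3_cong
      npaths_level2_origin_level3_eq npaths_level3 n_pos
    by (auto simp: npaths_to_lower_level numeral_2_eq_2)
qed

end
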